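(* Let $A\in\mathcal F$ with $\mathbb P(A)>0$, and for $k\ge1$ let $m_k(\omega)$ be the $k$-th visiting time of the $\theta$-orbit of $\omega$ to $A$, i.e. $m_1(\omega)=\min\{n\ge1:\theta^n\omega\in A\}$ and $m_{k+1}(\omega)=\min\{n>m_k(\omega):\theta^n\omega\in A\}$. If $m_1\in L^p(\Omega,\mathcal F,\mathbb P)$ for some $p>0$, then for every $0<\delta<p$ there exists $B\in L^{p/2-\delta}(\Omega,\mathcal F,\mathbb P)$ such that for $\mathbb P$-a.e. $\omega$ and all $k\ge1$, $$m_k(\omega)\le B(\omega)k^{1+1/p+\delta}.$$
   Context: $(\Omega,\mathcal F,\mathbb P,\theta)$ is the shift system of a stationary sequence indexed by $\mathbb Z$; $\theta$ is an invertible measurable map preserving $\mathbb P$. *)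

theory Defs
  imports "HOL-Probability.Probability"
begin

fun visit_time :: "('a \<Rightarrow> 'a) \<Rightarrow> 'a set \<Rightarrow> nat \<Rightarrow> 'a \<Rightarrow> enat" where
  "visit_time T A 0 x = 0"
| "visit_time T A (Suc k) x =
     (if \<exists>n. enat n > visit_time T A k x \<and> (T ^^ n) x \<in> A
      then enat (LEAST n. enat n > visit_time T A k x \<and> (T ^^ n) x \<in> A)
      else \<infinity>)"

definition in_Lp :: "'a measure \<Rightarrow> real \<Rightarrow> ('a \<Rightarrow> real) \<Rightarrow> bool" where
  "in_Lp M q f \<longleftrightarrow> f \<in> borel_measurable M \<and> integrable M (\<lambda>x. \<bar>f x\<bar> powr q)"

end

theory Submission
  imports Defs
begin

text \<open>
  Write r_i = m_1(\<theta>^i \<omega>) for the waiting time at time i. Up to m_k there are k gaps between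
  consecutive visits, so one of them has length G \<ge> m_k / k; along that gap the waiting times are
  G, G - 1, ..., 1, hence (m_k / 2k)^(1+p) \<le> (G/2)^(1+p) \<le> sum_{i<m_k} r_i^p. On the other hand
  sum_{i<m_k} r_i^p \<le> m_k^(1+\<epsilon>) S with S = sum_i (i+1)^-(1+\<epsilon>) r_i^p, and stationarity gives
  E S = \<zeta>(1+\<epsilon>) E m_1^p < \<infinity>. Solving for m_k yields
  m_k \<le> (2^(1+p) S)^(1/(p-\<epsilon>)) k^((1+p)/(p-\<epsilon>)); for small \<epsilon> this exponent is at most
  1 + 1/p + \<delta>, and B = (2^(1+p) S)^(1/(p-\<epsilon>)) + 1 even lies in L^(p-\<epsilon>).
\<close>

definition next_in :: "nat set \<Rightarrow> nat \<Rightarrow> nat" where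
  "next_in V i = (LEAST n. i < n \<and> n \<in> V)"

lemma next_in_least: "i < n \<Longrightarrow> n \<in> V \<Longrightarrow> next_in V i \<le> n"
  unfolding next_in_def by (simp add: Least_le)

lemma
  assumes "infinite V"
  shows next_in_gt: "i < next_in V i" and next_in_mem: "next_in V i \<in> V"
proof -
  have "\<exists>n. i < n \<and> n \<in> V" using assms by (simp add: infinite_nat_iff_unbounded)
  then have "i < next_in V i \<and> next_in V i \<in> V" unfolding next_in_def by (rule LeastI_ex)
  then show "i < next_in V i" "next_in V i \<in> V" by auto
qed

lemma next_in_eq:
  assumes "infinite V" "i \<le> j" "j < next_in V i"
  shows "next_in V j = next_in V i"
proof (rule antisym)
  show "next_in V j \<le> next_in V i"
    using assms by (intro next_in_least next_in_mem)
  show "next_in V i \<le> next_in V j"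
    using assms next_in_gt[of V j] by (intro next_in_least next_in_mem) auto
qed

lemma strict_mono_iterates_next_in:
  "infinite V \<Longrightarrow> strict_mono (\<lambda>k. (next_in V ^^ k) 0)"
  by (simp add: strict_mono_Suc_iff next_in_gt)

lemma exists_increment_ge_average:
  fixes u :: "nat \<Rightarrow> real"
  assumes "0 < k"
  shows "\<exists>j<k. u k - u 0 \<le> real k * (u (Suc j) - u j)"
proof (rule ccontr)
  assume "\<not> ?thesis"
  then have "\<And>j. j \<in> {..<k} \<Longrightarrow> u (Suc j) - u j < (u k - u 0) / real k"
    using assms by (auto simp: not_le field_simps)
  then have "(\<Sum>j<k. u (Suc j) - u j) < real k * ((u k - u 0) / real k)"
    using sum_bounded_above_strict[of "{..<k}" _ "(u k - u 0) / real k"] assms by simp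
  then show False using assms by (simp add: sum_lessThan_telescope)
qed

lemma sum_powr_diff_ge:
  fixes p :: real
  assumes "0 \<le> p"
  shows "(real (b - a) / 2) powr (1 + p) \<le> (\<Sum>i\<in>{a..<b}. real (b - i) powr p)"
proof (cases "a < b")
  case False
  then show ?thesis by simp
next
  case True
  define G where "G = b - a"
  have G: "1 \<le> G" using True unfolding G_def by simp
  have "(real G / 2) powr (1 + p) = real G / 2 * (real G / 2) powr p"
    using G by (simp add: powr_add)
  also have "\<dots> \<le> real (card {a..a + G div 2}) * (real G / 2) powr p"
  proof (rule mult_right_mono)
    have "G \<le> 2 * card {a..a + G div 2}" by simp
    then show "real G / 2 \<le> real (card {a..a + G div 2})" by linarith
  qed simp
  also have "\<dots> \<le> (\<Sum>i\<in>{a..a + G div 2}. real (b - i) powr p)"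
  proof (intro sum_bounded_below powr_mono2)
    fix i assume "i \<in> {a..a + G div 2}"
    then have "G \<le> 2 * (b - i)" using True unfolding G_def by auto
    then show "real G / 2 \<le> real (b - i)" by linarith
  qed (use assms in auto)
  also have "\<dots> \<le> (\<Sum>i\<in>{a..<b}. real (b - i) powr p)"
    using G by (intro sum_mono2) (auto simp: G_def)
  finally show ?thesis unfolding G_def .
qed

lemma iterate_next_in_powr_le_sum_waiting:
  fixes p :: real
  assumes V: "infinite V" and k: "0 < k" and p: "0 \<le> p"
  defines "m \<equiv> (next_in V ^^ k) 0"
  shows "(real m / (2 * real k)) powr (1 + p) \<le> (\<Sum>i<m. real (next_in V i - i) powr p)"
proof -
  let ?v = "\<lambda>j. (next_in V ^^ j) 0"
  have mono: "strict_mono ?v" using V by (rule strict_mono_iterates_next_in)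
  obtain j where j: "j < k" and gap: "real (?v k) - real (?v 0) \<le> real k * (real (?v (Suc j)) - real (?v j))"
    using exists_increment_ge_average[OF k, of "\<lambda>j. real (?v j)"] by blast
  define a where "a = ?v j"
  define b where "b = ?v (Suc j)"
  have ab: "a < b" using mono unfolding a_def b_def strict_mono_def by blast
  have bm: "b \<le> m"
    using strict_mono_less_eq[OF mono, of "Suc j" k] j unfolding b_def m_def by simp
  have "real m / (2 * real k) \<le> real (b - a) / 2"
    using gap ab k unfolding a_def b_def m_def by (simp add: field_simps of_nat_diff)
  then have "(real m / (2 * real k)) powr (1 + p) \<le> (real (b - a) / 2) powr (1 + p)"
    using p by (intro powr_mono2) auto
  also have "\<dots> \<le> (\<Sum>i\<in>{a..<b}. real (b - i) powr p)"
    using p by (rule sum_powr_diff_ge)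
  also have "\<dots> = (\<Sum>i\<in>{a..<b}. real (next_in V i - i) powr p)"
  proof (intro sum.cong refl)
    fix i assume "i \<in> {a..<b}"
    then have "next_in V i = b"
      using next_in_eq[OF V, of a i] unfolding b_def a_def by simp
    then show "real (b - i) powr p = real (next_in V i - i) powr p" by simp
  qed
  also have "\<dots> \<le> (\<Sum>i<m. real (next_in V i - i) powr p)"
    using bm by (intro sum_mono2) auto
  finally show ?thesis .
qed

lemma powr_growth_bound:
  fixes m k S p \<epsilon> :: real
  assumes m: "1 \<le> m" and k: "1 \<le> k" and S: "0 \<le> S" and \<epsilon>: "\<epsilon> < p"
    and h: "(m / (2 * k)) powr (1 + p) \<le> S * m powr (1 + \<epsilon>)"
  shows "m \<le> (2 powr (1 + p) * S) powr (1 / (p - \<epsilon>)) * k powr ((1 + p) / (p - \<epsilon>))"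
proof -
  have "m powr (1 + \<epsilon>) * m powr (p - \<epsilon>) = m powr (1 + p)"
    by (simp add: powr_add[symmetric])
  also have "\<dots> = (m / (2 * k)) powr (1 + p) * (2 * k) powr (1 + p)"
    using m k by (simp add: powr_divide)
  also have "\<dots> \<le> m powr (1 + \<epsilon>) * (2 powr (1 + p) * S * k powr (1 + p))"
    using h k by (simp add: powr_mult mult_right_mono ac_simps)
  finally have "m powr (p - \<epsilon>) \<le> 2 powr (1 + p) * S * k powr (1 + p)"
    using m by simp
  then have "(m powr (p - \<epsilon>)) powr (1 / (p - \<epsilon>))
      \<le> (2 powr (1 + p) * S * k powr (1 + p)) powr (1 / (p - \<epsilon>))"
    using \<epsilon> by (intro powr_mono2) auto
  then show ?thesis
    using m k S \<epsilon> by (simp add: powr_powr powr_mult)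
qed

lemma iterate_next_in_le_weighted_sum:
  fixes V :: "nat set" and p \<epsilon> :: real
  defines "w \<equiv> \<lambda>i. real (Suc i) powr - (1 + \<epsilon>) * real (next_in V i - i) powr p"
  assumes V: "infinite V" and k: "0 < k" and \<epsilon>: "0 \<le> \<epsilon>" "\<epsilon> < p"
    and w: "summable w"
  shows "real ((next_in V ^^ k) 0)
    \<le> (2 powr (1 + p) * suminf w) powr (1 / (p - \<epsilon>)) * real k powr ((1 + p) / (p - \<epsilon>))"
proof -
  define m where "m = (next_in V ^^ k) 0"
  have w0: "0 \<le> w i" for i unfolding w_def by simp
  have "k \<le> m" unfolding m_def using strict_mono_iterates_next_in[OF V] by (rule seq_suble)
  with k have m: "1 \<le> real m" by simp
  have "(real m / (2 * real k)) powr (1 + p) \<le> (\<Sum>i<m. real (next_in V i - i) powr p)"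
    unfolding m_def using V k \<epsilon> by (intro iterate_next_in_powr_le_sum_waiting) auto
  also have "\<dots> \<le> (\<Sum>i<m. real m powr (1 + \<epsilon>) * w i)"
  proof (rule sum_mono)
    fix i assume "i \<in> {..<m}"
    then have "real (Suc i) powr (1 + \<epsilon>) \<le> real m powr (1 + \<epsilon>)"
      using \<epsilon> by (intro powr_mono2) auto
    then have "real (Suc i) powr (1 + \<epsilon>) * w i \<le> real m powr (1 + \<epsilon>) * w i"
      using w0 by (rule mult_right_mono)
    moreover have "real (Suc i) powr (1 + \<epsilon>) * w i = real (next_in V i - i) powr p"
    proof -
      have "real (Suc i) powr (1 + \<epsilon>) * w i
          = (real (Suc i) powr (1 + \<epsilon>) * inverse (real (Suc i) powr (1 + \<epsilon>)))
            * real (next_in V i - i) powr p"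
        unfolding w_def powr_minus by (simp only: mult.assoc)
      then show ?thesis by simp
    qed
    ultimately show "real (next_in V i - i) powr p \<le> real m powr (1 + \<epsilon>) * w i"
      by simp
  qed
  also have "\<dots> \<le> real m powr (1 + \<epsilon>) * suminf w"
    unfolding sum_distrib_left[symmetric] using w w0 by (intro mult_left_mono sum_le_suminf) auto
  finally have "(real m / (2 * real k)) powr (1 + p) \<le> suminf w * real m powr (1 + \<epsilon>)"
    by (simp add: mult.commute)
  then show ?thesis
    using m k \<epsilon> w w0 unfolding m_def by (intro powr_growth_bound suminf_nonneg) auto
qed

lemma exists_exponent_close:
  fixes p \<delta> :: real
  assumes "0 < p" "0 < \<delta>"
  shows "\<exists>\<epsilon>>0. \<epsilon> \<le> p / 2 \<and> (1 + p) / (p - \<epsilon>) \<le> 1 + 1 / p + \<delta>"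
proof -
  have "((\<lambda>\<epsilon>. (1 + p) / (p - \<epsilon>)) \<longlongrightarrow> (1 + p) / (p - 0)) (at_right 0)"
    using assms by (intro tendsto_intros) auto
  moreover have "(1 + p) / (p - 0) < 1 + 1 / p + \<delta>"
    using assms by (simp add: field_simps)
  ultimately have "\<forall>\<^sub>F \<epsilon> in at_right 0. (1 + p) / (p - \<epsilon>) < 1 + 1 / p + \<delta>"
    by (rule order_tendstoD)
  moreover have "\<forall>\<^sub>F \<epsilon> in at_right 0. 0 < \<epsilon> \<and> \<epsilon> \<le> p / 2"
    using assms by (intro eventually_at_rightI[of 0 "p / 2"]) auto
  ultimately have "\<forall>\<^sub>F \<epsilon> in at_right 0. 0 < \<epsilon> \<and> \<epsilon> \<le> p / 2 \<and> (1 + p) / (p - \<epsilon>) < 1 + 1 / p + \<delta>"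
    by eventually_elim blast
  then obtain \<epsilon> where "0 < \<epsilon> \<and> \<epsilon> \<le> p / 2 \<and> (1 + p) / (p - \<epsilon>) < 1 + 1 / p + \<delta>"
    using eventually_happens'[OF trivial_limit_at_right_real] by blast
  then show ?thesis by (intro exI[of _ \<epsilon>]) auto
qed

definition visits :: "('a \<Rightarrow> 'a) \<Rightarrow> 'a set \<Rightarrow> 'a \<Rightarrow> nat set" where
  "visits T A x = {n. (T ^^ n) x \<in> A}"

lemma visit_time_eq_iterate_next_in:
  assumes "infinite (visits T A x)"
  shows "visit_time T A k x = enat ((next_in (visits T A x) ^^ k) 0)"
proof (induction k)
  case 0
  then show ?case by (simp add: zero_enat_def)
next
  case (Suc k)
  define m where "m = (next_in (visits T A x) ^^ k) 0"
  have "\<exists>n. m < n \<and> (T ^^ n) x \<in> A"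
    using assms by (auto simp: infinite_nat_iff_unbounded visits_def)
  moreover have "next_in (visits T A x) m = (LEAST n. m < n \<and> (T ^^ n) x \<in> A)"
    by (simp add: next_in_def visits_def)
  ultimately show ?case using Suc by (simp add: m_def)
qed

lemma visits_funpow: "visits T A ((T ^^ i) x) = {n. n + i \<in> visits T A x}"
  by (simp add: visits_def funpow_add)

lemma visit_time_one_funpow:
  assumes V: "infinite (visits T A x)"
  shows "visit_time T A 1 ((T ^^ i) x) = enat (next_in (visits T A x) i - i)"
proof -
  let ?V = "visits T A x"
  have "next_in (visits T A ((T ^^ i) x)) 0 = next_in ?V i - i"
    unfolding next_in_def[of _ 0] visits_funpow
  proof (rule Least_equality)
    show "0 < next_in ?V i - i \<and> next_in ?V i - i \<in> {n. n + i \<in> ?V}"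
      using next_in_gt[OF V, of i] next_in_mem[OF V, of i] by simp
    show "next_in ?V i - i \<le> n" if "0 < n \<and> n \<in> {n. n + i \<in> ?V}" for n
      using next_in_least[of i "n + i" ?V] that by simp
  qed
  moreover have "infinite (visits T A ((T ^^ i) x))"
    unfolding visits_funpow infinite_nat_iff_unbounded
  proof
    fix m
    obtain n where "m + i < n" "n \<in> ?V" using V unfolding infinite_nat_iff_unbounded by blast
    then show "\<exists>n>m. n \<in> {n. n + i \<in> ?V}" by (intro exI[of _ "n - i"]) auto
  qed
  ultimately show ?thesis
    using visit_time_eq_iterate_next_in[of T A "(T ^^ i) x" 1] by simp
qed

lemma infinite_visits:
  assumes "\<And>i. visit_time T A 1 ((T ^^ i) x) \<noteq> \<infinity>"
  shows "infinite (visits T A x)"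
  unfolding infinite_nat_iff_unbounded
proof
  fix i
  obtain n where "0 < n" "n \<in> visits T A ((T ^^ i) x)"
    using assms[of i] by (auto simp: zero_enat_def visits_def split: if_splits)
  then show "\<exists>n>i. n \<in> visits T A x"
    unfolding visits_funpow by (intro exI[of _ "n + i"]) auto
qed

lemma measurable_funpow:
  assumes "T \<in> measurable M M"
  shows "T ^^ n \<in> measurable M M"
proof (induction n)
  case (Suc n)
  then show ?case unfolding funpow.simps(2) using assms by (rule measurable_comp)
qed simp

lemma distr_funpow:
  assumes "T \<in> measurable M M" "distr M M T = M"
  shows "distr M M (T ^^ n) = M"
proof (induction n)
  case (Suc n)
  have "distr M M (T ^^ Suc n) = distr (distr M M (T ^^ n)) M T"
    by (simp only: funpow.simps(2) distr_distr[OF assms(1) measurable_funpow[OF assms(1)]])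
  then show ?case by (simp only: Suc assms(2))
qed (simp add: distr_id2)

lemma nn_integral_funpow_series:
  fixes g :: "'a \<Rightarrow> ennreal" and c :: "nat \<Rightarrow> ennreal"
  assumes T: "T \<in> measurable M M" "distr M M T = M" and g[measurable]: "g \<in> borel_measurable M"
  shows "(\<integral>\<^sup>+x. (\<Sum>i. c i * g ((T ^^ i) x)) \<partial>M) = (\<Sum>i. c i) * integral\<^sup>N M g"
proof -
  have [measurable]: "T ^^ i \<in> measurable M M" for i
    using T(1) by (rule measurable_funpow)
  have g_funpow: "(\<integral>\<^sup>+x. g ((T ^^ i) x) \<partial>M) = integral\<^sup>N M g" for i
  proof -
    have "integral\<^sup>N M g = integral\<^sup>N (distr M M (T ^^ i)) g"
      by (simp only: distr_funpow[OF T])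
    also have "\<dots> = (\<integral>\<^sup>+x. g ((T ^^ i) x) \<partial>M)"
      by (rule nn_integral_distr) (simp_all only: distr_funpow[OF T] g measurable_funpow[OF T(1)])
    finally show ?thesis ..
  qed
  have "(\<integral>\<^sup>+x. c i * g ((T ^^ i) x) \<partial>M) = c i * integral\<^sup>N M g" for i
    by (subst nn_integral_cmult) (measurable, simp only: g_funpow)
  moreover have "(\<integral>\<^sup>+x. (\<Sum>i. c i * g ((T ^^ i) x)) \<partial>M) = (\<Sum>i. \<integral>\<^sup>+x. c i * g ((T ^^ i) x) \<partial>M)"
    by (rule nn_integral_suminf) measurable
  ultimately show ?thesis by simp
qed

lemma integrable_enn2real:
  assumes "f \<in> borel_measurable M" "integral\<^sup>N M f \<noteq> \<infinity>"
  shows "integrable M (\<lambda>x. enn2real (f x))"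
proof (rule integrableI_bounded)
  have "(\<integral>\<^sup>+x. ennreal (norm (enn2real (f x))) \<partial>M) \<le> integral\<^sup>N M f"
    by (intro nn_integral_mono) (simp add: ennreal_enn2real_if)
  then show "(\<integral>\<^sup>+x. ennreal (norm (enn2real (f x))) \<partial>M) < \<infinity>"
    using assms(2) by (simp add: top.not_eq_extremum le_less_trans)
qed (use assms(1) in simp)

lemma in_Lp_powr_plus_one:
  fixes e q :: real
  assumes "finite_measure M" and S: "integrable M S" "\<And>x. 0 \<le> S x" and e: "0 < e" "q \<le> e"
  shows "in_Lp M q (\<lambda>x. S x powr (1 / e) + 1)"
proof -
  interpret finite_measure M by fact
  have [measurable]: "S \<in> borel_measurable M" using S(1) by auto
  have bound: "\<bar>S x powr (1 / e) + 1\<bar> powr q \<le> 2 powr e * (S x + 1)" for x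
  proof -
    define X where "X = S x powr (1 / e)"
    have X: "0 \<le> X" "X powr e = S x" unfolding X_def using S(2)[of x] e by (simp_all add: powr_powr)
    have "\<bar>X + 1\<bar> powr q \<le> (X + 1) powr e"
      using X e by (subst abs_of_nonneg) (auto intro!: powr_mono)
    also have "\<dots> \<le> (2 * max X 1) powr e"
      using X e by (intro powr_mono2) auto
    also have "\<dots> = 2 powr e * max X 1 powr e"
      using X by (simp add: powr_mult)
    also have "max X 1 powr e \<le> S x + 1"
      using X e S(2)[of x] by (cases "X \<le> 1") (auto simp: max_def)
    finally show ?thesis unfolding X_def by simp
  qed
  have "integrable M (\<lambda>x. 2 powr e * (S x + 1))"
    using S(1) by (intro integrable_mult_right integrable_add) auto
  then have "integrable M (\<lambda>x. \<bar>S x powr (1 / e) + 1\<bar> powr q)"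
    by (rule Bochner_Integration.integrable_bound) (use bound S(2) in \<open>auto intro!: AE_I2\<close>)
  then show ?thesis unfolding in_Lp_def by simp
qed

lemma AE_infinite_visits:
  assumes T: "T \<in> measurable M M" "distr M M T = M"
    and m1: "AE x in M. visit_time T A 1 x \<noteq> \<infinity>"
  shows "AE x in M. infinite (visits T A x)"
proof -
  have "AE x in M. visit_time T A 1 ((T ^^ i) x) \<noteq> \<infinity>" for i
    by (rule AE_distrD[OF measurable_funpow[OF T(1)]]) (simp only: distr_funpow[OF T] m1)
  then have "AE x in M. \<forall>i. visit_time T A 1 ((T ^^ i) x) \<noteq> \<infinity>"
    by (simp only: AE_all_countable) blast
  then show ?thesis
    by eventually_elim (rule infinite_visits, blast)
qed

definition weighted_return_sum :: "('a \<Rightarrow> 'a) \<Rightarrow> 'a set \<Rightarrow> real \<Rightarrow> real \<Rightarrow> 'a \<Rightarrow> ennreal" where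
  "weighted_return_sum T A p \<epsilon> x =
    (\<Sum>i. ennreal (real (Suc i) powr - (1 + \<epsilon>) * real (the_enat (visit_time T A 1 ((T ^^ i) x))) powr p))"

lemma
  assumes T: "T \<in> measurable M M" "distr M M T = M"
    and m1: "in_Lp M p (\<lambda>x. real (the_enat (visit_time T A 1 x)))" and \<epsilon>: "0 < \<epsilon>"
  shows borel_measurable_weighted_return_sum: "weighted_return_sum T A p \<epsilon> \<in> borel_measurable M"
    and nn_integral_weighted_return_sum_finite: "integral\<^sup>N M (weighted_return_sum T A p \<epsilon>) \<noteq> \<infinity>"
proof -
  define f where "f = (\<lambda>x. real (the_enat (visit_time T A 1 x)))"
  have [measurable]: "f \<in> borel_measurable M" and int: "integrable M (\<lambda>x. \<bar>f x\<bar> powr p)"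
    using m1 unfolding in_Lp_def f_def by blast+
  have abs_f: "\<bar>f x\<bar> = f x" for x unfolding f_def by (rule abs_of_nonneg) (rule of_nat_0_le_iff)
  have [measurable]: "T ^^ i \<in> measurable M M" for i using T(1) by (rule measurable_funpow)
  have eq: "weighted_return_sum T A p \<epsilon> =
      (\<lambda>x. \<Sum>i. ennreal (real (Suc i) powr - (1 + \<epsilon>)) * ennreal (f ((T ^^ i) x) powr p))"
    unfolding weighted_return_sum_def f_def by (simp add: ennreal_mult)
  show "weighted_return_sum T A p \<epsilon> \<in> borel_measurable M" unfolding eq by measurable
  have "summable (\<lambda>i. real (Suc i) powr - (1 + \<epsilon>))"
    using \<epsilon> summable_real_powr_iff[of "- (1 + \<epsilon>)"] by (subst summable_Suc_iff) simp
  then have "(\<Sum>i. ennreal (real (Suc i) powr - (1 + \<epsilon>))) \<noteq> \<infinity>"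
    by (simp add: ennreal_suminf_neq_top)
  moreover have "(\<integral>\<^sup>+x. ennreal (f x powr p) \<partial>M) \<noteq> \<infinity>"
    using integrableD(2)[OF int[unfolded abs_f]] .
  moreover have "integral\<^sup>N M (weighted_return_sum T A p \<epsilon>)
      = (\<Sum>i. ennreal (real (Suc i) powr - (1 + \<epsilon>))) * (\<integral>\<^sup>+x. ennreal (f x powr p) \<partial>M)"
    unfolding eq by (rule nn_integral_funpow_series[OF T]) measurable
  ultimately show "integral\<^sup>N M (weighted_return_sum T A p \<epsilon>) \<noteq> \<infinity>"
    by (simp add: ennreal_mult_eq_top_iff)
qed

lemma visit_time_le_weighted_return_sum:
  fixes p \<epsilon> :: real
  assumes V: "infinite (visits T A x)" and k: "0 < k" and \<epsilon>: "0 \<le> \<epsilon>" "\<epsilon> < p"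
    and fin: "weighted_return_sum T A p \<epsilon> x \<noteq> \<infinity>"
  shows "visit_time T A k x \<noteq> \<infinity> \<and> real (the_enat (visit_time T A k x))
    \<le> (2 powr (1 + p) * enn2real (weighted_return_sum T A p \<epsilon> x)) powr (1 / (p - \<epsilon>))
      * real k powr ((1 + p) / (p - \<epsilon>))"
proof -
  let ?V = "visits T A x"
  define w where "w i = real (Suc i) powr - (1 + \<epsilon>) * real (next_in ?V i - i) powr p" for i
  have "weighted_return_sum T A p \<epsilon> x = (\<Sum>i. ennreal (w i))"
    unfolding weighted_return_sum_def w_def visit_time_one_funpow[OF V] by simp
  moreover have "0 \<le> w i" for i unfolding w_def by simp
  ultimately have "summable w" "enn2real (weighted_return_sum T A p \<epsilon> x) = suminf w"
    using fin by (simp_all add: summable_suminf_not_top suminf_nonneg)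
  then show ?thesis
    using iterate_next_in_le_weighted_sum[OF V k \<epsilon>] unfolding w_def
    by (simp add: visit_time_eq_iterate_next_in[OF V])
qed

theorem lemma9p4:
  fixes M :: "'a measure" and T :: "'a \<Rightarrow> 'a" and A :: "'a set" and p \<delta> :: real
  assumes "prob_space M"
    and "T \<in> measurable M M" and "bij_betw T (space M) (space M)"
    and "the_inv_into (space M) T \<in> measurable M M"
    and "distr M M T = M"
    and "A \<in> sets M" and "measure M A > 0"
    and "p > 0"
    and "AE x in M. visit_time T A 1 x \<noteq> \<infinity>"
    and "in_Lp M p (\<lambda>x. real (the_enat (visit_time T A 1 x)))"
    and "0 < \<delta>" and "\<delta> < p"
  shows "\<exists>B. in_Lp M (p / 2 - \<delta>) B \<and>
    (AE x in M. \<forall>k\<ge>1. visit_time T A k x \<noteq> \<infinity> \<and>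
        real (the_enat (visit_time T A k x)) \<le> B x * real k powr (1 + 1 / p + \<delta>))"
proof -
  interpret prob_space M by fact
  obtain \<epsilon> where \<epsilon>: "0 < \<epsilon>" "\<epsilon> \<le> p / 2" "(1 + p) / (p - \<epsilon>) \<le> 1 + 1 / p + \<delta>"
    using exists_exponent_close[OF assms(8,11)] by blast
  define R where "R = weighted_return_sum T A p \<epsilon>"
  have R: "R \<in> borel_measurable M" "integral\<^sup>N M R \<noteq> \<infinity>"
    unfolding R_def using assms(2,5,10) \<epsilon>(1)
    by (rule borel_measurable_weighted_return_sum, rule nn_integral_weighted_return_sum_finite)
  define B where "B x = (2 powr (1 + p) * enn2real (R x)) powr (1 / (p - \<epsilon>)) + 1" for x
  have B_Lp: "in_Lp M (p / 2 - \<delta>) B"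
    unfolding B_def using \<epsilon> assms(11)
    by (intro in_Lp_powr_plus_one finite_measure_axioms integrable_mult_right integrable_enn2real R) auto
  have "AE x in M. \<forall>k\<ge>1. visit_time T A k x \<noteq> \<infinity> \<and>
      real (the_enat (visit_time T A k x)) \<le> B x * real k powr (1 + 1 / p + \<delta>)"
    using AE_infinite_visits[OF assms(2,5,9)] nn_integral_noteq_infinite[OF R]
  proof eventually_elim
    case (elim x)
    show ?case
    proof (intro allI impI)
      fix k :: nat assume k: "1 \<le> k"
      have "visit_time T A k x \<noteq> \<infinity> \<and> real (the_enat (visit_time T A k x))
          \<le> (2 powr (1 + p) * enn2real (R x)) powr (1 / (p - \<epsilon>)) * real k powr ((1 + p) / (p - \<epsilon>))"
        using elim k \<epsilon> assms(8) unfolding R_def by (intro visit_time_le_weighted_return_sum) auto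
      moreover have "real k powr ((1 + p) / (p - \<epsilon>)) \<le> real k powr (1 + 1 / p + \<delta>)"
        using k \<epsilon>(3) by (intro powr_mono) auto
      ultimately show "visit_time T A k x \<noteq> \<infinity> \<and>
          real (the_enat (visit_time T A k x)) \<le> B x * real k powr (1 + 1 / p + \<delta>)"
        unfolding B_def by (auto elim!: order.trans intro!: mult_mono)
    qed
  qed
  with B_Lp show ?thesis by blast
qed

end
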